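(* Let $V^{(1)},\dots,V^{(6)}$ be the six partitions of the set $W_2^8$ of weight-2 words of length 8 into parallel classes listed below. Then $$|\mathcal{X}(V^{(1)})|=6,\ |\mathcal{X}(V^{(2)})|=2,\ |\mathcal{X}(V^{(3)})|=2,\ |\mathcal{X}(V^{(4)})|=14,\ |\mathcal{X}(V^{(5)})|=0,\ |\mathcal{X}(V^{(6)})|=0.$$
   Context: Coordinates of $\mathbb{F}_2^8$ are indexed $0,\dots,7$; a weight-2 word is identified with its support, a pair $\{a,b\}$. $W_2^8$ is the set of all 28 words of length 8 and weight 2. A parallel class is a set of 4 weight-2 words with pairwise disjoint supports; a partition $V=\{P_1,\dots,P_7\}$ of $W_2^8$ into 7 parallel classes is considered. For $x\in\mathbb{F}_2^8$ of weight 4, a parallel class $P$ is $x$-even if every word of $P$ is orthogonal to $x$ over $\mathbb{F}_2$, and $x$-odd if no word of $P$ is orthogonal to $x$. $\mathcal{X}(V)$ is the set of all $x\in\mathbb{F}_2^8$ of weight 4 such that among $P_1,\dots,P_7$ exactly four are $x$-odd and three are $x$-even. The partitions (each class written as its four pairs): $V^{(1)}$: $\{07,16,25,34\}$, $\{17,06,35,24\}$, $\{27,36,15,04\}$, $\{37,26,05,14\}$, $\{47,56,13,02\}$, $\{57,46,03,12\}$, $\{67,45,23,01\}$. $V^{(2)}$: $\{07,26,15,34\}$, $\{17,36,05,24\}$, $\{27,06,35,14\}$, $\{37,16,25,04\}$, $\{47,56,13,02\}$, $\{57,46,03,12\}$, $\{67,45,23,01\}$. $V^{(3)}$: $\{07,26,35,14\}$,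 $\{17,36,05,24\}$, $\{27,06,15,34\}$, $\{37,16,25,04\}$, $\{47,56,03,12\}$, $\{57,46,13,02\}$, $\{67,45,23,01\}$. $V^{(4)}$: $\{07,16,35,24\}$, $\{17,06,25,34\}$, $\{27,36,15,04\}$, $\{37,26,05,14\}$, $\{47,56,13,02\}$, $\{57,46,03,12\}$, $\{67,45,23,01\}$. $V^{(5)}$: $\{07,26,15,34\}$, $\{17,56,24,03\}$, $\{27,46,05,13\}$, $\{37,16,25,04\}$, $\{47,06,35,12\}$, $\{57,36,14,02\}$, $\{67,45,23,01\}$. $V^{(6)}$: $\{07,56,34,12\}$, $\{17,26,45,03\}$, $\{27,06,35,14\}$, $\{37,46,15,02\}$, $\{47,16,05,23\}$, $\{57,36,24,01\}$, $\{67,25,04,13\}$. Here e.g. $07$ denotes the pair $\{0,7\}$. *)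

theory Defs
  imports Main
begin

text \<open>A binary word of length 8 (an element of F_2^8) is identified with its support,
  a subset of {0..<8}; a weight-2 word is identified with its support pair.\<close>

definition binword8 :: "nat set \<Rightarrow> bool" where
  "binword8 x \<longleftrightarrow> x \<subseteq> {0..<8}"

definition weight :: "nat set \<Rightarrow> nat" where
  "weight x = card x"

text \<open>Standard inner product over F_2 of two words: parity of the common support.\<close>
definition orth :: "nat set \<Rightarrow> nat set \<Rightarrow> bool" where
  "orth u x \<longleftrightarrow> even (card (u \<inter> x))"

definition x_even :: "nat set \<Rightarrow> nat set set \<Rightarrow> bool" where
  "x_even x P \<longleftrightarrow> (\<forall>w\<in>P. orth w x)"

definition x_odd :: "nat set \<Rightarrow> nat set set \<Rightarrow> bool" where
  "x_odd x P \<longleftrightarrow> (\<forall>w\<in>P. \<not> orth w x)"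

text \<open>A partition V = [P_1,...,P_7] is given as a list of 7 parallel classes.\<close>
definition XV :: "nat set set list \<Rightarrow> nat set set" where
  "XV V = {x. binword8 x \<and> weight x = 4 \<and>
      card {i. i < length V \<and> x_odd x (V ! i)} = 4 \<and>
      card {i. i < length V \<and> x_even x (V ! i)} = 3}"

definition V1 :: "nat set set list" where
  "V1 = [{{0,7}, {1,6}, {2,5}, {3,4}},
    {{1,7}, {0,6}, {3,5}, {2,4}},
    {{2,7}, {3,6}, {1,5}, {0,4}},
    {{3,7}, {2,6}, {0,5}, {1,4}},
    {{4,7}, {5,6}, {1,3}, {0,2}},
    {{5,7}, {4,6}, {0,3}, {1,2}},
    {{6,7}, {4,5}, {2,3}, {0,1}}]"

definition V2 :: "nat set set list" where
  "V2 = [{{0,7}, {2,6}, {1,5}, {3,4}},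
    {{1,7}, {3,6}, {0,5}, {2,4}},
    {{2,7}, {0,6}, {3,5}, {1,4}},
    {{3,7}, {1,6}, {2,5}, {0,4}},
    {{4,7}, {5,6}, {1,3}, {0,2}},
    {{5,7}, {4,6}, {0,3}, {1,2}},
    {{6,7}, {4,5}, {2,3}, {0,1}}]"

definition V3 :: "nat set set list" where
  "V3 = [{{0,7}, {2,6}, {3,5}, {1,4}},
    {{1,7}, {3,6}, {0,5}, {2,4}},
    {{2,7}, {0,6}, {1,5}, {3,4}},
    {{3,7}, {1,6}, {2,5}, {0,4}},
    {{4,7}, {5,6}, {0,3}, {1,2}},
    {{5,7}, {4,6}, {1,3}, {0,2}},
    {{6,7}, {4,5}, {2,3}, {0,1}}]"

definition V4 :: "nat set set list" where
  "V4 = [{{0,7}, {1,6}, {3,5}, {2,4}},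
    {{1,7}, {0,6}, {2,5}, {3,4}},
    {{2,7}, {3,6}, {1,5}, {0,4}},
    {{3,7}, {2,6}, {0,5}, {1,4}},
    {{4,7}, {5,6}, {1,3}, {0,2}},
    {{5,7}, {4,6}, {0,3}, {1,2}},
    {{6,7}, {4,5}, {2,3}, {0,1}}]"

definition V5 :: "nat set set list" where
  "V5 = [{{0,7}, {2,6}, {1,5}, {3,4}},
    {{1,7}, {5,6}, {2,4}, {0,3}},
    {{2,7}, {4,6}, {0,5}, {1,3}},
    {{3,7}, {1,6}, {2,5}, {0,4}},
    {{4,7}, {0,6}, {3,5}, {1,2}},
    {{5,7}, {3,6}, {1,4}, {0,2}},
    {{6,7}, {4,5}, {2,3}, {0,1}}]"

definition V6 :: "nat set set list" where
  "V6 = [{{0,7}, {5,6}, {3,4}, {1,2}},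
    {{1,7}, {2,6}, {4,5}, {0,3}},
    {{2,7}, {0,6}, {3,5}, {1,4}},
    {{3,7}, {4,6}, {1,5}, {0,2}},
    {{4,7}, {1,6}, {0,5}, {2,3}},
    {{5,7}, {3,6}, {2,4}, {0,1}},
    {{6,7}, {2,5}, {0,4}, {1,3}}]"

end

theory Submission
  imports Defs
begin

text \<open>The sets \<open>\<X>(V)\<close> are finite and explicit, so the theorem is a computation: \<open>\<X>(V)\<close> is
  the set of subsets of \<open>{0..<8}\<close> passing an executable test, and its cardinality is the
  number of sublists of \<open>[0..<8]\<close> passing that test, which the code simplifier evaluates.\<close>

lemma card_Pow_filter_conv_length_subseqs:
  assumes "distinct xs"
  shows "card {A \<in> Pow (set xs). P A} = length (filter (P \<circ> set) (subseqs xs))"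
proof -
  have "{A \<in> Pow (set xs). P A} = set (filter P (map set (subseqs xs)))"
    by (auto simp flip: subseqs_powset)
  moreover have "distinct (filter P (map set (subseqs xs)))"
    using distinct_set_subseqs[OF assms] by simp
  ultimately show ?thesis
    by (metis distinct_card filter_map length_map)
qed

definition in_XV :: "nat set set list \<Rightarrow> nat set \<Rightarrow> bool" where
  "in_XV V x \<longleftrightarrow> card x = 4 \<and>
     length (filter (x_odd x) V) = 4 \<and> length (filter (x_even x) V) = 3"

lemma XV_eq_Pow_filter: "XV V = {x \<in> Pow (set [0..<8]). in_XV V x}"
  unfolding XV_def in_XV_def binword8_def weight_def length_filter_conv_card
  by auto

lemma card_XV_conv_length_subseqs:
  "card (XV V) = length (filter (in_XV V \<circ> set) (subseqs [0..<8]))"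
  unfolding XV_eq_Pow_filter
  by (rule card_Pow_filter_conv_length_subseqs) simp

theorem lemma3:
  shows "card (XV V1) = 6 \<and> card (XV V2) = 2 \<and> card (XV V3) = 2 \<and>
         card (XV V4) = 14 \<and> card (XV V5) = 0 \<and> card (XV V6) = 0"
  unfolding card_XV_conv_length_subseqs in_XV_def x_odd_def x_even_def orth_def
    V1_def V2_def V3_def V4_def V5_def V6_def
  by code_simp

end
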